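(* Let the left-invariant coframe $(f^I)$ on $\mathbf{Sp}(2,\mathbb{R})$ and the distribution $D_s$ be as in the context. Consider 3-forms $\phi=\tfrac16\sum_{\mu,\nu,\rho=1}^7\phi_{\mu\nu\rho}f^\mu\wedge f^\nu\wedge f^\rho$ with real constant totally antisymmetric coefficients. Then $\mathcal{L}_X\phi=0$ for all vector fields $X$ in $D_s$ if and only if $$\phi=a(4f^{147}+f^{246}+2f^{345})+b(2f^{156}+f^{236}-4f^{137})+qf^{136}+h(f^{256}-4f^{157}-2f^{237})+pf^{257}$$ for some real constants $a,b,q,h,p$; in particular these form precisely a 5-parameter family.
   Context: Realize $\mathfrak{sp}(2,\mathbb{R})$ as the real $4\times 4$ matrices $$E=\begin{pmatrix} a_5&a_7&a_9&2a_{10}\\ -a_4&a_6&a_8&a_9\\ a_2&a_3&-a_6&-a_7\\ -2a_1&a_2&a_4&-a_5\end{pmatrix}$$ with basis $E_I=\partial E/\partial a_I$. Put $f_1=E_1,\ f_2=E_3,\ f_3=E_4,\ f_4=E_6-E_5,\ f_5=E_7,\ f_6=E_8,\ f_7=E_{10},\ f_8=E_2,\ f_9=E_5+E_6,\ f_{10}=E_9$, regarded as left-invariant vector fields on $\mathbf{Sp}(2,\mathbb{R})$, with dual left-invariant 1-forms $(f^I)$ satisfying ${\rm d} f^1=2f^1\wedge(f^4-f^9)+f^3\wedge f^8$, ${\rm d} f^2=-2f^2\wedge (f^4+f^9)+2f^5\wedge f^8$, ${\rm d} f^3=2f^1\wedge f^{10}+2f^3\wedge f^4+f^6\wedge f^8$,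 ${\rm d} f^4=2f^1\wedge f^7+\tfrac12f^2\wedge f^6+f^3\wedge f^5$, ${\rm d} f^5=f^2\wedge f^{10}+2f^4\wedge f^5-2f^7\wedge f^8$, ${\rm d} f^6=2f^3\wedge f^{10}-2(f^4+f^9)\wedge f^6$, ${\rm d} f^7=2(f^4-f^9)\wedge f^{7}-f^5\wedge f^{10}$, ${\rm d} f^8=2f^1\wedge f^5+f^2\wedge f^3-2f^8\wedge f^9$, ${\rm d} f^9=-2f^1\wedge f^7+\tfrac12f^2\wedge f^6+f^8\wedge f^{10}$, ${\rm d} f^{10}=2f^3\wedge f^7-f^5\wedge f^6-2f^9\wedge f^{10}$. $D_s$ is the rank-3 distribution spanned by $f_8,f_9,f_{10}$ (annihilator of $f^1,\dots,f^7$). Notation: $f^{\mu\nu\rho}=f^\mu\wedge f^\nu\wedge f^\rho$. *)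

theory Defs
  imports Complex_Main
begin

text \<open>Left-invariant calculus on Sp(2,R) in the coframe f^1..f^10, indices 1..10.
  A left-invariant k-form is represented by its (constant) values on the
  left-invariant frame f_1..f_10.\<close>

definition kd :: "nat \<Rightarrow> nat \<Rightarrow> real" where
  "kd a b = (if a = b then 1 else 0)"

text \<open>Structure equations: d f^k = sum of c * f^a wedge f^b, listed as (c,a,b).\<close>
definition dstr :: "nat \<Rightarrow> (real \<times> nat \<times> nat) list" where
  "dstr k =
    (if k = 1 then [(2,1,4),(-2,1,9),(1,3,8)]
     else if k = 2 then [(-2,2,4),(-2,2,9),(2,5,8)]
     else if k = 3 then [(2,1,10),(2,3,4),(1,6,8)]
     else if k = 4 then [(2,1,7),(1/2,2,6),(1,3,5)]
     else if k = 5 then [(1,2,10),(2,4,5),(-2,7,8)]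
     else if k = 6 then [(2,3,10),(-2,4,6),(-2,9,6)]
     else if k = 7 then [(2,4,7),(-2,9,7),(-1,5,10)]
     else if k = 8 then [(2,1,5),(1,2,3),(-2,8,9)]
     else if k = 9 then [(-2,1,7),(1/2,2,6),(1,8,10)]
     else if k = 10 then [(2,3,7),(-1,5,6),(-2,9,10)]
     else [])"

text \<open>(d f^k)(f_i,f_j), with (f^a wedge f^b)(X,Y) = f^a(X) f^b(Y) - f^a(Y) f^b(X).\<close>
definition df :: "nat \<Rightarrow> nat \<Rightarrow> nat \<Rightarrow> real" where
  "df k i j = sum_list (map (\<lambda>(c,a,b). c * (kd a i * kd b j - kd a j * kd b i)) (dstr k))"

text \<open>Bracket coefficients [f_x, f_i] = sum_l br x i l f_l, from
  d theta(X,Y) = - theta([X,Y]) for left-invariant theta, X, Y.\<close>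
definition br :: "nat \<Rightarrow> nat \<Rightarrow> nat \<Rightarrow> real" where
  "br x i l = - df l x i"

text \<open>The 3-form phi = 1/6 sum_{mu,nu,rho=1..7} phi_{mu nu rho} f^{mu nu rho},
  evaluated on frame vectors (f_i,f_j,f_k).\<close>
definition eval3 :: "(nat \<Rightarrow> nat \<Rightarrow> nat \<Rightarrow> real) \<Rightarrow> nat \<Rightarrow> nat \<Rightarrow> nat \<Rightarrow> real" where
  "eval3 \<phi> i j k = (if i \<in> {1..7} \<and> j \<in> {1..7} \<and> k \<in> {1..7} then \<phi> i j k else 0)"

text \<open>Lie derivative of a left-invariant 3-form along the left-invariant field f_x:
  (L_X w)(Y,Z,W) = X(w(Y,Z,W)) - w([X,Y],Z,W) - w(Y,[X,Z],W) - w(Y,Z,[X,W]),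
  the first term vanishing.\<close>
definition lie_li :: "nat \<Rightarrow> (nat \<Rightarrow> nat \<Rightarrow> nat \<Rightarrow> real) \<Rightarrow> nat \<Rightarrow> nat \<Rightarrow> nat \<Rightarrow> real" where
  "lie_li x w i j k =
     - (\<Sum>l\<in>{1..10}. br x i l * w l j k + br x j l * w i l k + br x k l * w i j l)"

definition interior :: "nat \<Rightarrow> (nat \<Rightarrow> nat \<Rightarrow> nat \<Rightarrow> real) \<Rightarrow> nat \<Rightarrow> nat \<Rightarrow> real" where
  "interior x w i j = w x i j"

definition wedge12 :: "(nat \<Rightarrow> real) \<Rightarrow> (nat \<Rightarrow> nat \<Rightarrow> real) \<Rightarrow> nat \<Rightarrow> nat \<Rightarrow> nat \<Rightarrow> real" where
  "wedge12 \<alpha> \<beta> i j k = \<alpha> i * \<beta> j k - \<alpha> j * \<beta> i k + \<alpha> k * \<beta> i j"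

text \<open>Value at a point of L_X w for a section X = sum_{s=8,9,10} g^s f_s of D_s
  (w left-invariant): L_X w = sum_s g^s L_{f_s} w + dg^s wedge i_{f_s} w.
  Here c s = g^s(p) and \<alpha> s i = (dg^s)_p(f_i); these range over all reals
  independently as X ranges over smooth sections of D_s.\<close>
definition lie_sec :: "(nat \<Rightarrow> real) \<Rightarrow> (nat \<Rightarrow> nat \<Rightarrow> real) \<Rightarrow> (nat \<Rightarrow> nat \<Rightarrow> nat \<Rightarrow> real)
    \<Rightarrow> nat \<Rightarrow> nat \<Rightarrow> nat \<Rightarrow> real" where
  "lie_sec c \<alpha> w i j k =
     (\<Sum>s\<in>{8,9,10}. c s * lie_li s w i j k + wedge12 (\<alpha> s) (interior s w) i j k)"

definition fw3 :: "nat \<Rightarrow> nat \<Rightarrow> nat \<Rightarrow> nat \<Rightarrow> nat \<Rightarrow> nat \<Rightarrow> real" where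
  "fw3 m n r i j k =
     kd m i * kd n j * kd r k - kd m i * kd n k * kd r j
   - kd m j * kd n i * kd r k + kd m j * kd n k * kd r i
   + kd m k * kd n i * kd r j - kd m k * kd n j * kd r i"

definition family :: "real \<Rightarrow> real \<Rightarrow> real \<Rightarrow> real \<Rightarrow> real \<Rightarrow> nat \<Rightarrow> nat \<Rightarrow> nat \<Rightarrow> real" where
  "family a b q h p i j k =
      a * (4 * fw3 1 4 7 i j k + fw3 2 4 6 i j k + 2 * fw3 3 4 5 i j k)
    + b * (2 * fw3 1 5 6 i j k + fw3 2 3 6 i j k - 4 * fw3 1 3 7 i j k)
    + q * fw3 1 3 6 i j k
    + h * (fw3 2 5 6 i j k - 4 * fw3 1 5 7 i j k - 2 * fw3 2 3 7 i j k)
    + p * fw3 2 5 7 i j k"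

end

theory Submission
  imports Defs
begin

(* Since phi involves only f^1, ..., f^7 while D_s is spanned by f_8, f_9, f_10, the
   contractions of phi with sections of D_s vanish, so for X = sum_s g^s f_s we get
   L_X phi = sum_s g^s L_(f_s) phi: the condition is invariance under the three left-invariant
   fields f_8, f_9, f_10, which act on left-invariant forms as derivations with
   L_(f_s) f^mu = i_(f_s) df^mu.
   The field f_9 is diagonal with weights (2, 2, 0, 0, 0, -2, -2) on f^1, ..., f^7, so an
   f_9-invariant phi lives on the thirteen weight-zero triples 136, 137, 146, 147, 156, 157, 236,
   237, 246, 247, 256, 257, 345.  Eight of the equations expressing f_8-invariance cut these down
   to the five parameters, and the Leibniz rule shows that the resulting family is invariant
   under all three fields. *)

definition alternating_on :: "'a set \<Rightarrow> ('a \<Rightarrow> 'a \<Rightarrow> 'a \<Rightarrow> real) \<Rightarrow> bool" where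
  "alternating_on S w \<longleftrightarrow>
     (\<forall>i\<in>S. \<forall>j\<in>S. \<forall>k\<in>S. w j i k = - w i j k \<and> w i k j = - w i j k)"

lemma alternating_on_swap:
  assumes "alternating_on S w" "i \<in> S" "j \<in> S" "k \<in> S"
  shows "w j i k = - w i j k" "w i k j = - w i j k"
  using assms unfolding alternating_on_def by blast+

lemma alternating_on_sort:
  fixes w :: "'a::linorder \<Rightarrow> 'a \<Rightarrow> 'a \<Rightarrow> real"
  assumes "alternating_on S w" "i \<in> S" "j \<in> S" "k \<in> S"
  shows "j < i \<Longrightarrow> w i j k = - w j i k" "k < j \<Longrightarrow> w i j k = - w i k j"
  using alternating_on_swap[OF assms(1,3,2,4)] alternating_on_swap[OF assms(1,2,4,3)]
  by linarith+

lemma alternating_on_diag: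
  assumes "alternating_on S w" "i \<in> S" "k \<in> S"
  shows "w i i k = 0" "w i k k = 0" "w i k i = 0"
  using alternating_on_swap[OF assms(1,2,2,3)] alternating_on_swap[OF assms(1,2,3,3)]
  by linarith+

lemma alternating_on_eqI:
  fixes u v :: "'a::linorder \<Rightarrow> 'a \<Rightarrow> 'a \<Rightarrow> real"
  assumes u: "alternating_on S u" and v: "alternating_on S v"
    and sorted: "\<And>i j k. i \<in> S \<Longrightarrow> j \<in> S \<Longrightarrow> k \<in> S \<Longrightarrow> i < j \<Longrightarrow> j < k \<Longrightarrow>
                   u i j k = v i j k"
    and S: "i \<in> S" "j \<in> S" "k \<in> S"
  shows "u i j k = v i j k"
proof -
  note sort = alternating_on_sort[OF u] alternating_on_sort[OF v]
  note diag = alternating_on_diag[OF u] alternating_on_diag[OF v]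
  consider "i = j" | "j = k" | "i = k" | "i < j" "j < k" | "i < k" "k < j" | "j < i" "i < k"
    | "j < k" "k < i" | "k < i" "i < j" | "k < j" "j < i"
    by (metis linorder_neqE)
  then show ?thesis
  proof cases
    case 4
    then show ?thesis using sorted S by blast
  qed (use S sorted sort diag in simp_all)
qed

lemma alternating_on_eval3:
  assumes "alternating_on {1..7} \<phi>"
  shows "alternating_on S (eval3 \<phi>)"
  unfolding alternating_on_def
proof (intro ballI conjI)
  fix i j k
  show "eval3 \<phi> j i k = - eval3 \<phi> i j k" "eval3 \<phi> i k j = - eval3 \<phi> i j k"
    using alternating_on_swap[OF assms, of i j k] by (auto simp: eval3_def)
qed

(* Simp rewrites 1 to Suc 0 via One_nat_def before this rule gets a chance to fire,
   so it is used with One_nat_def deleted from the simpset. *)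
lemma atLeastAtMost_1_10: "{1..10::nat} = {1, 2, 3, 4, 5, 6, 7, 8, 9, 10}"
  by (auto; presburger)

lemma atLeastAtMost_1_7: "{1..7::nat} = {1, 2, 3, 4, 5, 6, 7}"
  by (auto; presburger)

lemma kd_commute: "kd a b = kd b a"
  by (simp add: kd_def)

lemma sum_kd:
  assumes "m \<in> {1..10}"
  shows "(\<Sum>l\<in>{1..10}. kd m l * g l) = (g m :: real)"
  using assms by (simp add: kd_def if_distrib[of "\<lambda>x. x * _"] sum.delta cong: if_cong)

lemma fw3_swap_args:
  "fw3 m n r j i k = - fw3 m n r i j k" "fw3 m n r i k j = - fw3 m n r i j k"
  "fw3 n m r i j k = - fw3 m n r i j k" "fw3 m r n i j k = - fw3 m n r i j k"
  unfolding fw3_def by (simp_all add: algebra_simps)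

lemma fw3_rotate:
  "fw3 m n r i j k = fw3 m n r k i j" "fw3 m n r i j k = fw3 r m n i j k"
  unfolding fw3_def by (simp_all add: algebra_simps)

lemma fw3_sort:
  "n < m \<Longrightarrow> fw3 m n r i j k = - fw3 n m r i j k"
  "r < n \<Longrightarrow> fw3 m n r i j k = - fw3 m r n i j k"
  "fw3 m m r i j k = 0" "fw3 m n n i j k = 0"
  unfolding fw3_def by (simp_all add: algebra_simps)

lemma fw3_expand:
  "fw3 m n r l j k = kd m l * (kd n j * kd r k - kd n k * kd r j)
     - kd n l * (kd m j * kd r k - kd m k * kd r j) + kd r l * (kd m j * kd n k - kd m k * kd n j)"
  "fw3 l n r i j k = kd l i * (kd n j * kd r k - kd n k * kd r j)
     - kd l j * (kd n i * kd r k - kd n k * kd r i) + kd l k * (kd n i * kd r j - kd n j * kd r i)"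
  unfolding fw3_def by (simp_all add: algebra_simps kd_commute)

lemma sum_mult_fw3_arg1:
  assumes "m \<in> {1..10}" "n \<in> {1..10}" "r \<in> {1..10}"
  shows "(\<Sum>l\<in>{1..10}. D l * fw3 m n r l j k) =
     D m * (kd n j * kd r k - kd n k * kd r j) - D n * (kd m j * kd r k - kd m k * kd r j)
     + D r * (kd m j * kd n k - kd m k * kd n j)"
proof -
  have "(\<Sum>l\<in>{1..10}. D l * fw3 m n r l j k) =
      (\<Sum>l\<in>{1..10}. kd m l * (D l * (kd n j * kd r k - kd n k * kd r j)))
    - (\<Sum>l\<in>{1..10}. kd n l * (D l * (kd m j * kd r k - kd m k * kd r j)))
    + (\<Sum>l\<in>{1..10}. kd r l * (D l * (kd m j * kd n k - kd m k * kd n j)))"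
    unfolding fw3_expand(1) by (simp add: algebra_simps sum.distrib sum_subtractf)
  then show ?thesis
    unfolding sum_kd[OF assms(1)] sum_kd[OF assms(2)] sum_kd[OF assms(3)] .
qed

lemma sum_mult_fw3_factor1:
  assumes "i \<in> {1..10}" "j \<in> {1..10}" "k \<in> {1..10}"
  shows "(\<Sum>l\<in>{1..10}. D l * fw3 l n r i j k) =
     D i * (kd n j * kd r k - kd n k * kd r j) - D j * (kd n i * kd r k - kd n k * kd r i)
     + D k * (kd n i * kd r j - kd n j * kd r i)"
proof -
  have "(\<Sum>l\<in>{1..10}. D l * fw3 l n r i j k) =
      (\<Sum>l\<in>{1..10}. kd i l * (D l * (kd n j * kd r k - kd n k * kd r j)))
    - (\<Sum>l\<in>{1..10}. kd j l * (D l * (kd n i * kd r k - kd n k * kd r i)))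
    + (\<Sum>l\<in>{1..10}. kd k l * (D l * (kd n i * kd r j - kd n j * kd r i)))"
    unfolding fw3_expand(2)
    by (simp add: algebra_simps sum.distrib sum_subtractf
        kd_commute[of _ i] kd_commute[of _ j] kd_commute[of _ k])
  then show ?thesis
    unfolding sum_kd[OF assms(1)] sum_kd[OF assms(2)] sum_kd[OF assms(3)] .
qed

lemma alternating_on_family: "alternating_on S (family a b q h p)"
  unfolding alternating_on_def
proof (intro ballI conjI)
  fix i j k
  show "family a b q h p j i k = - family a b q h p i j k"
    unfolding family_def fw3_swap_args(1)[of _ _ _ i j k] by (simp add: algebra_simps)
  show "family a b q h p i k j = - family a b q h p i j k"
    unfolding family_def fw3_swap_args(2)[of _ _ _ i j k] by (simp add: algebra_simps)
qed

lemma family_eq_0: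
  assumes "7 < k"
  shows "family a b q h p i j k = 0"
  using assms by (simp add: family_def fw3_def kd_def)

lemma family_inj:
  assumes "\<forall>i\<in>{1..10}. \<forall>j\<in>{1..10}. \<forall>k\<in>{1..10}.
             family a b q h p i j k = family a' b' q' h' p' i j k"
  shows "a = a' \<and> b = b' \<and> q = q' \<and> h = h' \<and> p = p'"
proof -
  have "family a b q h p 2 4 6 = family a' b' q' h' p' 2 4 6"
    "family a b q h p 2 3 6 = family a' b' q' h' p' 2 3 6"
    "family a b q h p 1 3 6 = family a' b' q' h' p' 1 3 6"
    "family a b q h p 2 5 6 = family a' b' q' h' p' 2 5 6"
    "family a b q h p 2 5 7 = family a' b' q' h' p' 2 5 7"
    using assms by simp_all
  then show ?thesis by (simp add: family_def fw3_def kd_def)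
qed

definition lie_invariant :: "nat \<Rightarrow> (nat \<Rightarrow> nat \<Rightarrow> nat \<Rightarrow> real) \<Rightarrow> bool" where
  "lie_invariant x w \<longleftrightarrow> (\<forall>i\<in>{1..10}. \<forall>j\<in>{1..10}. \<forall>k\<in>{1..10}. lie_li x w i j k = 0)"

lemma lie_li_eq:
  "lie_li x w i j k =
     (\<Sum>l\<in>{1..10}. df l x i * w l j k + df l x j * w i l k + df l x k * w i j l)"
  unfolding lie_li_def br_def by (simp flip: sum_negf) (simp add: algebra_simps)

lemma lie_invariant_cong:
  assumes "\<forall>i\<in>{1..10}. \<forall>j\<in>{1..10}. \<forall>k\<in>{1..10}. u i j k = v i j k"
  shows "lie_invariant x u \<longleftrightarrow> lie_invariant x v"
proof -
  have "lie_li x u i j k = lie_li x v i j k" if "i \<in> {1..10}" "j \<in> {1..10}" "k \<in> {1..10}"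
    for i j k
    using assms that unfolding lie_li_eq by (intro sum.cong) auto
  then show ?thesis unfolding lie_invariant_def by simp
qed

(* Leibniz rule L_X f^(mnr) = L_X f^m \<and> f^(nr) + f^m \<and> L_X f^n \<and> f^r + f^(mn) \<and> L_X f^r,
   with L_X f^m = sum_l df^m(X, f_l) f^l. *)
lemma lie_li_fw3:
  assumes "m \<in> {1..10}" "n \<in> {1..10}" "r \<in> {1..10}"
    and "i \<in> {1..10}" "j \<in> {1..10}" "k \<in> {1..10}"
  shows "lie_li x (fw3 m n r) i j k =
    (\<Sum>l\<in>{1..10}. df m x l * fw3 l n r i j k + df n x l * fw3 m l r i j k
                  + df r x l * fw3 m n l i j k)"
proof -
  have "lie_li x (fw3 m n r) i j k =
      (\<Sum>l\<in>{1..10}. df l x i * fw3 m n r l j k) - (\<Sum>l\<in>{1..10}. df l x j * fw3 m n r l i k)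
    + (\<Sum>l\<in>{1..10}. df l x k * fw3 m n r l i j)"
    unfolding lie_li_eq fw3_swap_args(1)[of m n r i _ k] fw3_rotate(1)[of m n r i j]
    by (simp add: sum.distrib sum_subtractf)
  also have "\<dots> =
      (\<Sum>l\<in>{1..10}. df m x l * fw3 l n r i j k) - (\<Sum>l\<in>{1..10}. df n x l * fw3 l m r i j k)
    + (\<Sum>l\<in>{1..10}. df r x l * fw3 l m n i j k)"
    unfolding sum_mult_fw3_arg1[OF assms(1-3)] sum_mult_fw3_factor1[OF assms(4-6)]
    by (simp add: algebra_simps)
  also have "\<dots> =
      (\<Sum>l\<in>{1..10}. df m x l * fw3 l n r i j k + df n x l * fw3 m l r i j k
                    + df r x l * fw3 m n l i j k)"
    unfolding fw3_swap_args(3)[of m _ r i j k] fw3_rotate(2)[of m n _ i j k]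
    by (simp add: sum.distrib sum_subtractf)
  finally show ?thesis .
qed

lemma lie_li_family:
  "lie_li x (family a b q h p) i j k =
      a * (4 * lie_li x (fw3 1 4 7) i j k + lie_li x (fw3 2 4 6) i j k
           + 2 * lie_li x (fw3 3 4 5) i j k)
    + b * (2 * lie_li x (fw3 1 5 6) i j k + lie_li x (fw3 2 3 6) i j k
           - 4 * lie_li x (fw3 1 3 7) i j k)
    + q * lie_li x (fw3 1 3 6) i j k
    + h * (lie_li x (fw3 2 5 6) i j k - 4 * lie_li x (fw3 1 5 7) i j k
           - 2 * lie_li x (fw3 2 3 7) i j k)
    + p * lie_li x (fw3 2 5 7) i j k"
  by (simp add: lie_li_eq family_def sum.distrib sum_subtractf sum_distrib_left algebra_simps)

lemma lie_invariant_family: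
  assumes "x \<in> {8, 9, 10}"
  shows "lie_invariant x (family a b q h p)"
  unfolding lie_invariant_def
proof (intro ballI)
  fix i j k :: nat
  assume "i \<in> {1..10}" "j \<in> {1..10}" "k \<in> {1..10}"
  then have "lie_li x (fw3 m n r) i j k =
    (\<Sum>l\<in>{1..10}. df m x l * fw3 l n r i j k + df n x l * fw3 m l r i j k
                  + df r x l * fw3 m n l i j k)"
    if "m \<in> {1..10}" "n \<in> {1..10}" "r \<in> {1..10}" for m n r
    using that by (intro lie_li_fw3)
  with assms show "lie_li x (family a b q h p) i j k = 0"
    unfolding lie_li_family
    by (elim insertE emptyE)
      (simp_all add: atLeastAtMost_1_10 df_def dstr_def kd_def fw3_sort del: One_nat_def)
qed

(* f_9 = E_5 + E_6 lies in the Cartan subalgebra: L_(f_9) f^l = weight l * f^l. *)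
definition weight :: "nat \<Rightarrow> real" where
  "weight l = (if l \<in> {1, 2, 8} then 2 else if l \<in> {6, 7, 10} then -2 else 0)"

lemma df_9: "df l 9 i = weight l * kd l i"
proof (cases "l \<in> {1..10}")
  case True
  then show ?thesis
    unfolding atLeastAtMost_1_10
    by (elim insertE emptyE) (simp_all add: df_def dstr_def kd_def weight_def)
next
  case False
  then show ?thesis by (auto simp: df_def dstr_def weight_def)
qed

lemma lie_li_9:
  assumes "i \<in> {1..10}" "j \<in> {1..10}" "k \<in> {1..10}"
  shows "lie_li 9 w i j k = (weight i + weight j + weight k) * w i j k"
proof -
  have "lie_li 9 w i j k = (\<Sum>l\<in>{1..10}. kd i l * (weight l * w l j k))
      + (\<Sum>l\<in>{1..10}. kd j l * (weight l * w i l k))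
      + (\<Sum>l\<in>{1..10}. kd k l * (weight l * w i j l))"
    unfolding lie_li_eq df_9 by (simp add: sum.distrib kd_commute algebra_simps)
  then show ?thesis
    unfolding sum_kd[OF assms(1)] sum_kd[OF assms(2)] sum_kd[OF assms(3)]
    by (simp add: algebra_simps)
qed

lemma lie_invariant_9_weight:
  assumes "lie_invariant 9 (eval3 \<phi>)"
    and "i \<in> {1..7}" "j \<in> {1..7}" "k \<in> {1..7}" "weight i + weight j + weight k \<noteq> 0"
  shows "\<phi> i j k = 0"
proof -
  have "(weight i + weight j + weight k) * eval3 \<phi> i j k = 0"
    using assms(1-4) lie_li_9[of i j k "eval3 \<phi>"] unfolding lie_invariant_def by simp
  with assms(2-5) show ?thesis by (simp add: eval3_def)
qed

lemma lie_invariant_8_relations: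
  assumes alt: "alternating_on {1..7} \<phi>" and inv: "lie_invariant 8 (eval3 \<phi>)"
  shows "\<phi> 1 4 7 = 4 * \<phi> 2 4 6" "\<phi> 3 4 5 = 2 * \<phi> 2 4 6"
    "\<phi> 1 5 6 = 2 * \<phi> 2 3 6" "\<phi> 1 3 7 = - 4 * \<phi> 2 3 6"
    "\<phi> 2 3 7 = - 2 * \<phi> 2 5 6" "\<phi> 1 5 7 = - 4 * \<phi> 2 5 6"
    "\<phi> 1 4 6 = 0" "\<phi> 2 4 7 = 0"
proof -
  have "lie_li 8 (eval3 \<phi>) 1 6 7 = - \<phi> 1 3 7 - 2 * \<phi> 1 5 6"
    "lie_li 8 (eval3 \<phi>) 2 6 7 = - \<phi> 2 3 7 - 2 * \<phi> 2 5 6"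
    "lie_li 8 (eval3 \<phi>) 3 4 6 = - \<phi> 1 4 6"
    "lie_li 8 (eval3 \<phi>) 3 4 7 = 2 * \<phi> 3 4 5 - \<phi> 1 4 7"
    "lie_li 8 (eval3 \<phi>) 3 5 6 = 2 * \<phi> 2 3 6 - \<phi> 1 5 6"
    "lie_li 8 (eval3 \<phi>) 3 5 7 = 2 * \<phi> 2 3 7 - \<phi> 1 5 7"
    "lie_li 8 (eval3 \<phi>) 4 5 6 = 2 * \<phi> 2 4 6 - \<phi> 3 4 5"
    "lie_li 8 (eval3 \<phi>) 4 5 7 = 2 * \<phi> 2 4 7"
    by (simp_all add: lie_li_eq atLeastAtMost_1_10 df_def dstr_def kd_def eval3_def
        alternating_on_sort[OF alt] alternating_on_diag[OF alt] del: One_nat_def)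
  moreover have "lie_li 8 (eval3 \<phi>) 1 6 7 = 0" "lie_li 8 (eval3 \<phi>) 2 6 7 = 0"
    "lie_li 8 (eval3 \<phi>) 3 4 6 = 0" "lie_li 8 (eval3 \<phi>) 3 4 7 = 0"
    "lie_li 8 (eval3 \<phi>) 3 5 6 = 0" "lie_li 8 (eval3 \<phi>) 3 5 7 = 0"
    "lie_li 8 (eval3 \<phi>) 4 5 6 = 0" "lie_li 8 (eval3 \<phi>) 4 5 7 = 0"
    using inv unfolding lie_invariant_def by simp_all
  ultimately show "\<phi> 1 4 7 = 4 * \<phi> 2 4 6" "\<phi> 3 4 5 = 2 * \<phi> 2 4 6"
    "\<phi> 1 5 6 = 2 * \<phi> 2 3 6" "\<phi> 1 3 7 = - 4 * \<phi> 2 3 6"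
    "\<phi> 2 3 7 = - 2 * \<phi> 2 5 6" "\<phi> 1 5 7 = - 4 * \<phi> 2 5 6"
    "\<phi> 1 4 6 = 0" "\<phi> 2 4 7 = 0"
    by linarith+
qed

lemma lie_invariant_imp_family:
  assumes alt: "alternating_on {1..7} \<phi>"
    and inv8: "lie_invariant 8 (eval3 \<phi>)" and inv9: "lie_invariant 9 (eval3 \<phi>)"
    and "i \<in> {1..10}" "j \<in> {1..10}" "k \<in> {1..10}"
  shows "eval3 \<phi> i j k = family (\<phi> 2 4 6) (\<phi> 2 3 6) (\<phi> 1 3 6) (\<phi> 2 5 6) (\<phi> 2 5 7) i j k"
proof (rule alternating_on_eqI[OF alternating_on_eval3[OF alt] alternating_on_family])
  fix i j k :: nat
  assume "i \<in> {1..10}" "j \<in> {1..10}" "k \<in> {1..10}" "i < j" "j < k"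
  show "eval3 \<phi> i j k = family (\<phi> 2 4 6) (\<phi> 2 3 6) (\<phi> 1 3 6) (\<phi> 2 5 6) (\<phi> 2 5 7) i j k"
  proof (cases "k \<le> 7")
    case True
    have "\<forall>i\<in>{1..7}. \<forall>j\<in>{1..7}. \<forall>k\<in>{1..7}. i < j \<longrightarrow> j < k \<longrightarrow>
      \<phi> i j k = family (\<phi> 2 4 6) (\<phi> 2 3 6) (\<phi> 1 3 6) (\<phi> 2 5 6) (\<phi> 2 5 7) i j k"
      unfolding atLeastAtMost_1_7
      by (simp add: lie_invariant_8_relations[OF alt inv8] lie_invariant_9_weight[OF inv9]
          weight_def family_def fw3_def kd_def del: One_nat_def)
    from this[rule_format, of i j k] \<open>i \<in> {1..10}\<close> \<open>i < j\<close> \<open>j < k\<close> True show ?thesis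
      by (simp add: eval3_def)
  next
    case False
    then show ?thesis by (simp add: eval3_def family_eq_0)
  qed
qed (use assms in auto)

lemma lie_invariant_iff_family:
  assumes "alternating_on {1..7} \<phi>"
  shows "(\<forall>x\<in>{8, 9, 10}. lie_invariant x (eval3 \<phi>)) \<longleftrightarrow>
    (\<exists>a b q h p. \<forall>i\<in>{1..10}. \<forall>j\<in>{1..10}. \<forall>k\<in>{1..10}.
       eval3 \<phi> i j k = family a b q h p i j k)"
proof
  assume "\<forall>x\<in>{8, 9, 10}. lie_invariant x (eval3 \<phi>)"
  then show "\<exists>a b q h p. \<forall>i\<in>{1..10}. \<forall>j\<in>{1..10}. \<forall>k\<in>{1..10}.
      eval3 \<phi> i j k = family a b q h p i j k"
    using lie_invariant_imp_family[OF assms] by blast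
next
  assume "\<exists>a b q h p. \<forall>i\<in>{1..10}. \<forall>j\<in>{1..10}. \<forall>k\<in>{1..10}.
      eval3 \<phi> i j k = family a b q h p i j k"
  then show "\<forall>x\<in>{8, 9, 10}. lie_invariant x (eval3 \<phi>)"
    using lie_invariant_cong lie_invariant_family by blast
qed

(* The terms dg^s \<and> i_(f_s) phi drop out because phi has no f^8, f^9, f^10 components. *)
lemma lie_sec_eval3:
  "lie_sec c \<alpha> (eval3 \<phi>) i j k = (\<Sum>s\<in>{8, 9, 10}. c s * lie_li s (eval3 \<phi>) i j k)"
  by (simp add: lie_sec_def wedge12_def interior_def eval3_def)

lemma lie_sec_eval3_vanish_iff:
  "(\<forall>c \<alpha>. \<forall>i\<in>{1..10}. \<forall>j\<in>{1..10}. \<forall>k\<in>{1..10}. lie_sec c \<alpha> (eval3 \<phi>) i j k = 0)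
    \<longleftrightarrow> (\<forall>x\<in>{8, 9, 10}. lie_invariant x (eval3 \<phi>))"
  unfolding lie_invariant_def
proof (intro iffI ballI allI)
  fix x i j k :: nat
  assume "\<forall>c \<alpha>. \<forall>i\<in>{1..10}. \<forall>j\<in>{1..10}. \<forall>k\<in>{1..10}. lie_sec c \<alpha> (eval3 \<phi>) i j k = 0"
    and "x \<in> {8, 9, 10}" "i \<in> {1..10}" "j \<in> {1..10}" "k \<in> {1..10}"
  then have "lie_sec (\<lambda>s. of_bool (s = x)) \<alpha> (eval3 \<phi>) i j k = 0" for \<alpha>
    by blast
  with \<open>x \<in> {8, 9, 10}\<close> show "lie_li x (eval3 \<phi>) i j k = 0"
    unfolding lie_sec_eval3 by auto
qed (simp add: lie_sec_eval3)

theorem proposition4p2: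
  fixes \<phi> :: "nat \<Rightarrow> nat \<Rightarrow> nat \<Rightarrow> real"
  assumes antisym: "\<forall>i\<in>{1..7}. \<forall>j\<in>{1..7}. \<forall>k\<in>{1..7}.
                      \<phi> j i k = - \<phi> i j k \<and> \<phi> i k j = - \<phi> i j k"
  shows "((\<forall>c \<alpha>. \<forall>i\<in>{1..10}. \<forall>j\<in>{1..10}. \<forall>k\<in>{1..10}. lie_sec c \<alpha> (eval3 \<phi>) i j k = 0)
            \<longleftrightarrow> (\<exists>a b q h p. \<forall>i\<in>{1..10}. \<forall>j\<in>{1..10}. \<forall>k\<in>{1..10}.
                     eval3 \<phi> i j k = family a b q h p i j k))
       \<and> (\<forall>a b q h p a' b' q' h' p'.
            (\<forall>i\<in>{1..10}. \<forall>j\<in>{1..10}. \<forall>k\<in>{1..10}.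
               family a b q h p i j k = family a' b' q' h' p' i j k)
            \<longrightarrow> a = a' \<and> b = b' \<and> q = q' \<and> h = h' \<and> p = p')"
proof
  have "alternating_on {1..7} \<phi>"
    using antisym unfolding alternating_on_def .
  then show "(\<forall>c \<alpha>. \<forall>i\<in>{1..10}. \<forall>j\<in>{1..10}. \<forall>k\<in>{1..10}. lie_sec c \<alpha> (eval3 \<phi>) i j k = 0)
      \<longleftrightarrow> (\<exists>a b q h p. \<forall>i\<in>{1..10}. \<forall>j\<in>{1..10}. \<forall>k\<in>{1..10}.
            eval3 \<phi> i j k = family a b q h p i j k)"
    unfolding lie_sec_eval3_vanish_iff by (rule lie_invariant_iff_family)
qed (intro allI impI, erule family_inj)

end
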